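(* For $n\ge1$ let $A_n$ be the set of $n\times 2$ arrays $(m_{i,j})$ with entries in $\{0,1,2\}$ such that: (i) every entry $1$ has a $0$ immediately to its left or immediately above it; (ii) no entry $0$ has a $0$ immediately to its left or immediately above it; (iii) every entry $2$ has, in the same column, a $1$ immediately above it and a $0$ immediately above that $1$ (i.e. $m_{i,j}=2$ implies $i\ge 2$, $m_{i-1,j}=1$ and $m_{i-2,j}=0$, with rows indexed from the top). Let $d_n=|A_n|$. Then $d_n=d_{n-1}+2d_{n-3}$ for $n\ge4$, with $d_1=1$, $d_2=1$, $d_3=2$.
   Context: For example $A_1=\{(0\ 1)\}$ and $A_2=\left\{\begin{pmatrix}0&1\\1&0\end{pmatrix}\right\}$. *)

theory Defs
  imports Main
begin

text \<open>An n x 2 array is modelled as a function m :: nat => nat => nat, where m i j is the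
entry in row i (0-indexed, from the top) and column j (0-indexed, from the left), for i < n, j < 2.
To make the representation canonical, m is required to be 0 outside the array.\<close>

definition valid_array :: "nat \<Rightarrow> (nat \<Rightarrow> nat \<Rightarrow> nat) \<Rightarrow> bool" where
  "valid_array n m \<longleftrightarrow>
     (\<forall>i j. (n \<le> i \<or> 2 \<le> j) \<longrightarrow> m i j = 0) \<and>
     (\<forall>i<n. \<forall>j<2. m i j \<in> {0, 1, 2}) \<and>
     \<comment> \<open>(i) every 1 has a 0 immediately to its left or immediately above it\<close>
     (\<forall>i<n. \<forall>j<2. m i j = 1 \<longrightarrow>
        ((0 < j \<and> m i (j - 1) = 0) \<or> (0 < i \<and> m (i - 1) j = 0))) \<and>
     \<comment> \<open>(ii) no 0 has a 0 immediately to its left or immediately above it\<close>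
     (\<forall>i<n. \<forall>j<2. m i j = 0 \<longrightarrow>
        \<not> (0 < j \<and> m i (j - 1) = 0) \<and> \<not> (0 < i \<and> m (i - 1) j = 0)) \<and>
     \<comment> \<open>(iii) every 2 has a 1 directly above it and a 0 directly above that 1\<close>
     (\<forall>i<n. \<forall>j<2. m i j = 2 \<longrightarrow>
        (2 \<le> i \<and> m (i - 1) j = 1 \<and> m (i - 2) j = 0))"

definition A :: "nat \<Rightarrow> (nat \<Rightarrow> nat \<Rightarrow> nat) set" where
  "A n = {m. valid_array n m}"

definition d :: "nat \<Rightarrow> nat" where
  "d n = card (A n)"

end

theory Submission
  imports Defs
begin

(* Every constraint on an entry looks only at its left neighbour and at the two entries above it,
   so whether a row may follow the rows above it depends only on the two preceding rows. Counting
   valid arrays by their last two rows therefore gives a linear (transfer-matrix) recursion. Only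
   twelve pairs of consecutive rows ever occur, and eliminating the twelve counts from that
   recursion yields d (n + 3) = d (n + 2) + 2 d n. *)

definition row :: "(nat \<Rightarrow> nat \<Rightarrow> nat) \<Rightarrow> nat \<Rightarrow> nat \<times> nat" where
  "row m i = (m i 0, m i 1)"

(* Two virtual rows (2, 2) above the array make the boundary conditions of rows 0 and 1 instances
   of the rule for the interior rows: a row (2, 2) above acts like no row at all, since it supplies
   neither the 0 that permits a 1 nor the 0, 1 that permit a 2, and it does not forbid a 0. *)
definition padded_row :: "(nat \<Rightarrow> nat \<Rightarrow> nat) \<Rightarrow> nat \<Rightarrow> nat \<times> nat" where
  "padded_row m k = (if k < 2 then (2, 2) else row m (k - 2))"

fun admissible :: "nat \<times> nat \<Rightarrow> nat \<times> nat \<Rightarrow> nat \<times> nat \<Rightarrow> bool" where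
  "admissible (r, s) (p, q) (a, b) \<longleftrightarrow>
     a \<le> 2 \<and> b \<le> 2 \<and>
     (a = 1 \<longrightarrow> p = 0) \<and> (a = 0 \<longrightarrow> p \<noteq> 0) \<and> (a = 2 \<longrightarrow> p = 1 \<and> r = 0) \<and>
     (b = 1 \<longrightarrow> a = 0 \<or> q = 0) \<and> (b = 0 \<longrightarrow> a \<noteq> 0 \<and> q \<noteq> 0) \<and> (b = 2 \<longrightarrow> q = 1 \<and> s = 0)"

definition row_constraints :: "(nat \<Rightarrow> nat \<Rightarrow> nat) \<Rightarrow> nat \<Rightarrow> bool" where
  "row_constraints m i \<longleftrightarrow>
     (\<forall>j<2. m i j \<in> {0, 1, 2}) \<and>
     (\<forall>j<2. m i j = 1 \<longrightarrow> ((0 < j \<and> m i (j - 1) = 0) \<or> (0 < i \<and> m (i - 1) j = 0))) \<and>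
     (\<forall>j<2. m i j = 0 \<longrightarrow> \<not> (0 < j \<and> m i (j - 1) = 0) \<and> \<not> (0 < i \<and> m (i - 1) j = 0)) \<and>
     (\<forall>j<2. m i j = 2 \<longrightarrow> (2 \<le> i \<and> m (i - 1) j = 1 \<and> m (i - 2) j = 0))"

lemma all_less_2_iff: "(\<forall>j<(2::nat). P j) \<longleftrightarrow> P 0 \<and> P 1"
  by (auto simp: less_2_cases_iff)

lemma nat_cases_0_1_2:
  fixes x :: nat
  obtains "x = 0" | "x = 1" | "x = 2" | "2 < x"
  by linarith

lemma row_constraints_iff_admissible:
  "row_constraints m i \<longleftrightarrow> admissible (padded_row m i) (padded_row m (Suc i)) (row m i)"
proof -
  consider "i = 0" | "i = 1" | k where "i = Suc (Suc k)"
    by (cases i; cases "i - 1") auto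
  then show ?thesis
    by cases (cases rule: nat_cases_0_1_2[of "m i 0"]; cases rule: nat_cases_0_1_2[of "m i 1"];
        auto simp: row_constraints_def all_less_2_iff padded_row_def row_def)+
qed

lemma valid_array_iff_admissible:
  "valid_array n m \<longleftrightarrow> (\<forall>i j. (n \<le> i \<or> 2 \<le> j) \<longrightarrow> m i j = 0) \<and>
     (\<forall>i<n. admissible (padded_row m i) (padded_row m (Suc i)) (row m i))"
  unfolding valid_array_def row_constraints_iff_admissible[symmetric] row_constraints_def
  by blast

lemma row_fun_upd_other [simp]: "i \<noteq> n \<Longrightarrow> row (m(n := f)) i = row m i"
  by (simp add: row_def)

lemma padded_row_fun_upd_below [simp]: "k \<le> Suc n \<Longrightarrow> padded_row (m(n := f)) k = padded_row m k"
  by (simp add: padded_row_def)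

lemma valid_array_Suc_iff:
  "valid_array (Suc n) m \<longleftrightarrow> valid_array n (m(n := (\<lambda>_. 0))) \<and> (\<forall>j\<ge>2. m n j = 0) \<and>
     admissible (padded_row m n) (padded_row m (Suc n)) (row m n)"
proof -
  let ?adm = "\<lambda>m i. admissible (padded_row m i) (padded_row m (Suc i)) (row m i)"
  have rows: "(\<forall>i<n. ?adm (m(n := (\<lambda>_. 0))) i) \<longleftrightarrow> (\<forall>i<n. ?adm m i)"
    by simp
  have last_row: "(\<forall>i<Suc n. ?adm m i) \<longleftrightarrow> (\<forall>i<n. ?adm m i) \<and> ?adm m n"
    by (simp add: All_less_Suc conj_commute)
  have support: "(\<forall>i j. (Suc n \<le> i \<or> 2 \<le> j) \<longrightarrow> m i j = 0) \<longleftrightarrow>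
      (\<forall>i j. (n \<le> i \<or> 2 \<le> j) \<longrightarrow> (m(n := (\<lambda>_. 0))) i j = 0) \<and> (\<forall>j\<ge>2. m n j = 0)"
    by (auto simp: Suc_le_eq) (metis nat_less_le)
  show ?thesis
    unfolding valid_array_iff_admissible rows last_row support by (simp only: conj_ac)
qed

definition set_row :: "(nat \<Rightarrow> nat \<Rightarrow> nat) \<Rightarrow> nat \<Rightarrow> nat \<times> nat \<Rightarrow> nat \<Rightarrow> nat \<Rightarrow> nat" where
  "set_row m n z = m(n := (\<lambda>j. if j = 0 then fst z else if j = 1 then snd z else 0))"

lemma row_set_row [simp]: "row (set_row m n z) n = z"
  by (simp add: set_row_def row_def)

lemma padded_row_set_row_below [simp]:
  "k \<le> Suc n \<Longrightarrow> padded_row (set_row m n z) k = padded_row m k"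
  by (simp add: set_row_def)

lemma padded_row_set_row [simp]: "padded_row (set_row m n z) (Suc (Suc n)) = z"
  by (simp add: padded_row_def)

lemma A_0: "A 0 = {\<lambda>_ _. 0}"
  by (auto simp: A_def valid_array_def)

lemma A_last_row_zero: "m \<in> A n \<Longrightarrow> m n = (\<lambda>_. 0)"
  by (auto simp: A_def valid_array_def)

lemma set_row_row: "(\<forall>j\<ge>2. m n j = 0) \<Longrightarrow> set_row (m(n := (\<lambda>_. 0))) n (row m n) = m"
  by (auto simp: set_row_def row_def fun_eq_iff not_le less_2_cases_iff)

lemma A_Suc:
  "A (Suc n) = (\<lambda>(m, z). set_row m n z) `
     {(m, z). m \<in> A n \<and> admissible (padded_row m n) (padded_row m (Suc n)) z}"
proof (intro equalityI subsetI)
  fix m' assume "m' \<in> A (Suc n)"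
  then have "m'(n := (\<lambda>_. 0)) \<in> A n" "\<forall>j\<ge>2. m' n j = 0"
    and "admissible (padded_row m' n) (padded_row m' (Suc n)) (row m' n)"
    by (simp_all add: A_def valid_array_Suc_iff)
  then show "m' \<in> (\<lambda>(m, z). set_row m n z) `
     {(m, z). m \<in> A n \<and> admissible (padded_row m n) (padded_row m (Suc n)) z}"
    by (intro image_eqI[of _ _ "(m'(n := (\<lambda>_. 0)), row m' n)"]) (simp_all add: set_row_row)
next
  fix m' assume "m' \<in> (\<lambda>(m, z). set_row m n z) `
     {(m, z). m \<in> A n \<and> admissible (padded_row m n) (padded_row m (Suc n)) z}"
  then obtain m z where m': "m' = set_row m n z" and "m \<in> A n"
    and "admissible (padded_row m n) (padded_row m (Suc n)) z"
    by auto
  moreover have "m'(n := (\<lambda>_. 0)) = m"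
    using A_last_row_zero[OF \<open>m \<in> A n\<close>] by (auto simp: m' set_row_def)
  moreover have "\<forall>j\<ge>2. m' n j = 0"
    by (simp add: m' set_row_def)
  ultimately show "m' \<in> A (Suc n)"
    by (simp add: A_def valid_array_Suc_iff)
qed

lemma set_row_inject:
  assumes "m1 \<in> A n" "m2 \<in> A n" and eq: "set_row m1 n z1 = set_row m2 n z2"
  shows "m1 = m2 \<and> z1 = z2"
proof
  have "m1 = (set_row m1 n z1)(n := (\<lambda>_. 0))" "m2 = (set_row m2 n z2)(n := (\<lambda>_. 0))"
    using assms(1,2)[THEN A_last_row_zero] by (auto simp: set_row_def)
  then show "m1 = m2"
    using eq by simp
  show "z1 = z2"
    using arg_cong[OF eq, of "\<lambda>m. row m n"] by simp
qed

lemma inj_on_set_row: "inj_on (\<lambda>m. set_row m n z) (A n)"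
  by (auto intro!: inj_onI dest: set_row_inject)

definition row_values :: "(nat \<times> nat) set" where
  "row_values = {..2} \<times> {..2}"

lemma row_values_eq:
  "row_values = {(0, 0), (0, 1), (0, 2), (1, 0), (1, 1), (1, 2), (2, 0), (2, 1), (2, 2)}"
  by (auto simp: row_values_def numeral_2_eq_2 atMost_Suc)

lemma finite_row_values: "finite row_values"
  by (simp add: row_values_def)

lemma admissible_row_values: "admissible x y z \<Longrightarrow> z \<in> row_values"
  by (cases x; cases y; cases z) (simp add: row_values_def)

lemma padded_row_in_row_values:
  assumes "m \<in> A n"
  shows "padded_row m k \<in> row_values"
proof -
  have support: "\<forall>i j. (n \<le> i \<or> 2 \<le> j) \<longrightarrow> m i j = 0"
    and rows: "\<forall>i<n. admissible (padded_row m i) (padded_row m (Suc i)) (row m i)"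
    using assms by (simp_all add: A_def valid_array_iff_admissible)
  consider "k < 2" | "2 \<le> k" "k - 2 < n" | "2 \<le> k" "n \<le> k - 2"
    by linarith
  then show ?thesis
  proof cases
    case 1
    then show ?thesis by (simp add: padded_row_def row_values_def)
  next
    case 2
    then have "row m (k - 2) \<in> row_values"
      using rows admissible_row_values by blast
    with 2 show ?thesis
      by (simp add: padded_row_def)
  next
    case 3
    then show ?thesis
      using support by (simp add: padded_row_def row_def row_values_def)
  qed
qed

lemma finite_A: "finite (A n)"
proof (induction n)
  case 0
  show ?case by (simp add: A_0)
next
  case (Suc n)
  have "{(m, z). m \<in> A n \<and> admissible (padded_row m n) (padded_row m (Suc n)) z}
      \<subseteq> A n \<times> row_values"
    using admissible_row_values by blast
  then have "finite {(m, z). m \<in> A n \<and> admissible (padded_row m n) (padded_row m (Suc n)) z}"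
    using finite_subset finite_cartesian_product[OF Suc.IH finite_row_values] by blast
  then show ?case
    unfolding A_Suc by (rule finite_imageI)
qed

lemma card_eq_sum_card_fibres:
  assumes "finite M" "finite R" "f ` M \<subseteq> R"
  shows "card M = (\<Sum>x\<in>R. card {m \<in> M. f m = x})"
proof -
  have "(\<Sum>x\<in>R. \<Sum>m\<in>{m \<in> M. f m = x}. 1) = (\<Sum>m\<in>M. 1 :: nat)"
    by (rule sum.group[OF assms])
  then show ?thesis
    by simp
qed

definition ending :: "nat \<Rightarrow> nat \<times> nat \<Rightarrow> nat \<times> nat \<Rightarrow> (nat \<Rightarrow> nat \<Rightarrow> nat) set" where
  "ending n x y = {m \<in> A n. padded_row m n = x \<and> padded_row m (Suc n) = y}"

definition num_ending :: "nat \<Rightarrow> nat \<times> nat \<Rightarrow> nat \<times> nat \<Rightarrow> nat" where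
  "num_ending n x y = card (ending n x y)"

lemma ending_Suc:
  "ending (Suc n) y z =
     (\<lambda>m. set_row m n z) ` {m \<in> A n. padded_row m (Suc n) = y \<and> admissible (padded_row m n) y z}"
  unfolding ending_def A_Suc by force

lemma num_ending_Suc:
  "num_ending (Suc n) y z = (\<Sum>x\<in>row_values. if admissible x y z then num_ending n x y else 0)"
proof -
  let ?M = "{m \<in> A n. padded_row m (Suc n) = y \<and> admissible (padded_row m n) y z}"
  have "inj_on (\<lambda>m. set_row m n z) ?M"
    by (rule inj_on_subset[OF inj_on_set_row]) blast
  then have "num_ending (Suc n) y z = card ?M"
    by (simp add: num_ending_def ending_Suc card_image)
  also have "\<dots> = (\<Sum>x\<in>row_values. card {m \<in> ?M. padded_row m n = x})"
    using finite_A finite_row_values padded_row_in_row_values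
    by (intro card_eq_sum_card_fibres) auto
  also have "\<dots> = (\<Sum>x\<in>row_values. if admissible x y z then num_ending n x y else 0)"
  proof (rule sum.cong)
    fix x
    have "{m \<in> ?M. padded_row m n = x} = (if admissible x y z then ending n x y else {})"
      by (auto simp: ending_def)
    then show "card {m \<in> ?M. padded_row m n = x} =
        (if admissible x y z then num_ending n x y else 0)"
      by (simp add: num_ending_def)
  qed simp
  finally show ?thesis .
qed

lemma d_eq_sum_num_ending: "d n = (\<Sum>(x, y)\<in>row_values \<times> row_values. num_ending n x y)"
proof -
  have "d n = (\<Sum>p\<in>row_values \<times> row_values.
      card {m \<in> A n. (padded_row m n, padded_row m (Suc n)) = p})"
    unfolding d_def using finite_A finite_row_values padded_row_in_row_values
    by (intro card_eq_sum_card_fibres) auto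
  also have "\<dots> = (\<Sum>(x, y)\<in>row_values \<times> row_values. num_ending n x y)"
    by (rule sum.cong) (auto simp: num_ending_def ending_def)
  finally show ?thesis .
qed

lemma num_ending_0: "num_ending 0 x y = (if x = (2, 2) \<and> y = (2, 2) then 1 else 0)"
proof -
  have "ending 0 x y = (if x = (2, 2) \<and> y = (2, 2) then {\<lambda>_ _. 0} else {})"
    by (auto simp: ending_def A_0 padded_row_def)
  then show ?thesis
    by (simp add: num_ending_def)
qed

definition reachable_states :: "((nat \<times> nat) \<times> nat \<times> nat) set" where
  "reachable_states =
     {((2, 2), (2, 2)), ((2, 2), (0, 1)), ((0, 1), (1, 0)), ((0, 1), (1, 2)), ((0, 2), (1, 0)),
      ((1, 0), (0, 1)), ((1, 0), (2, 1)), ((1, 2), (0, 1)), ((1, 2), (2, 0)), ((2, 0), (0, 1)),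
      ((2, 1), (0, 1)), ((2, 1), (0, 2))}"

lemma admissible_reachable_states:
  "(x, y) \<in> reachable_states \<Longrightarrow> admissible x y z \<Longrightarrow> (y, z) \<in> reachable_states"
  using admissible_row_values[of x y z] unfolding reachable_states_def row_values_eq
  by (elim insertE emptyE; auto)

lemma num_ending_unreachable: "(x, y) \<notin> reachable_states \<Longrightarrow> num_ending n x y = 0"
proof (induction n arbitrary: x y)
  case 0
  then show ?case
    by (auto simp: num_ending_0 reachable_states_def)
next
  case (Suc n)
  have "num_ending n w x = 0" if "admissible w x y" for w
    using Suc admissible_reachable_states that by blast
  then show ?case
    unfolding num_ending_Suc by (intro sum.neutral) simp
qed

lemma num_ending_Suc_reachable:
  "num_ending (Suc n) (2, 2) (2, 2) = 0"
  "num_ending (Suc n) (2, 2) (0, 1) = num_ending n (2, 2) (2, 2)"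
  "num_ending (Suc n) (0, 1) (1, 0) = num_ending n (2, 2) (0, 1) + num_ending n (1, 0) (0, 1) +
     num_ending n (1, 2) (0, 1) + num_ending n (2, 0) (0, 1) + num_ending n (2, 1) (0, 1)"
  "num_ending (Suc n) (0, 1) (1, 2) = num_ending n (1, 0) (0, 1) + num_ending n (2, 0) (0, 1)"
  "num_ending (Suc n) (0, 2) (1, 0) = num_ending n (2, 1) (0, 2)"
  "num_ending (Suc n) (1, 0) (0, 1) = num_ending n (0, 1) (1, 0) + num_ending n (0, 2) (1, 0)"
  "num_ending (Suc n) (1, 0) (2, 1) = num_ending n (0, 1) (1, 0) + num_ending n (0, 2) (1, 0)"
  "num_ending (Suc n) (1, 2) (0, 1) = num_ending n (0, 1) (1, 2)"
  "num_ending (Suc n) (1, 2) (2, 0) = num_ending n (0, 1) (1, 2)"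
  "num_ending (Suc n) (2, 0) (0, 1) = num_ending n (1, 2) (2, 0)"
  "num_ending (Suc n) (2, 1) (0, 1) = num_ending n (1, 0) (2, 1)"
  "num_ending (Suc n) (2, 1) (0, 2) = num_ending n (1, 0) (2, 1)"
  by (simp_all add: num_ending_Suc row_values_eq num_ending_unreachable reachable_states_def)

lemma d_eq_sum_reachable:
  "d n = num_ending n (2, 2) (2, 2) + num_ending n (2, 2) (0, 1) + num_ending n (0, 1) (1, 0) +
     num_ending n (0, 1) (1, 2) + num_ending n (0, 2) (1, 0) + num_ending n (1, 0) (0, 1) +
     num_ending n (1, 0) (2, 1) + num_ending n (1, 2) (0, 1) + num_ending n (1, 2) (2, 0) +
     num_ending n (2, 0) (0, 1) + num_ending n (2, 1) (0, 1) + num_ending n (2, 1) (0, 2)"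
proof -
  have "d n = (\<Sum>(x, y)\<in>reachable_states. num_ending n x y)"
    unfolding d_eq_sum_num_ending
  proof (rule sum.mono_neutral_right)
    show "reachable_states \<subseteq> row_values \<times> row_values"
      by (simp add: reachable_states_def row_values_def)
  qed (use finite_row_values num_ending_unreachable in auto)
  then show ?thesis
    by (simp add: reachable_states_def)
qed

(* The correction term is 1 for n = 0 and 0 afterwards: it accounts for d 3 \<noteq> d 2 + 2 * d 0. *)
lemma d_recurrence:
  "d (Suc (Suc (Suc n))) + num_ending n (2, 2) (2, 2) = d (Suc (Suc n)) + 2 * d n"
  unfolding d_eq_sum_reachable num_ending_Suc_reachable by simp

lemma d_small: "d 1 = 1" "d 2 = 1" "d 3 = 2"
proof -
  have "d (Suc 0) = 1" "d (Suc (Suc 0)) = 1" "d (Suc (Suc (Suc 0))) = 2"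
    unfolding d_eq_sum_reachable num_ending_Suc_reachable num_ending_0 by simp_all
  then show "d 1 = 1" "d 2 = 1" "d 3 = 2"
    by (simp_all add: numeral_2_eq_2 numeral_3_eq_3)
qed

theorem theorem5:
  shows "d 1 = 1 \<and> d 2 = 1 \<and> d 3 = 2 \<and> (\<forall>n\<ge>4. d n = d (n - 1) + 2 * d (n - 3))"
proof (intro conjI allI impI)
  fix n :: nat
  assume "4 \<le> n"
  then obtain k where n: "n = Suc (Suc (Suc (Suc k)))"
    using Suc_diff_le[of 4 n] by (intro that[of "n - 4"]) (simp add: eval_nat_numeral)
  have "d (Suc (Suc (Suc (Suc k)))) = d (Suc (Suc (Suc k))) + 2 * d (Suc k)"
    using d_recurrence[of "Suc k"] by (simp add: num_ending_Suc_reachable(1))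
  then show "d n = d (n - 1) + 2 * d (n - 3)"
    by (simp add: n)
qed (fact d_small)+

end
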